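(* Let $R$ be a commutative domain with unit, let $f\in R$ be nonzero and non-invertible, and let $S=R[u,v]/(uv-f)$. Then the images of $u$ and $v$ are irreducible elements of $S$.
   Context: A nonzero element $r$ of a domain is irreducible if it is not invertible and whenever $r=r_1r_2$, one of $r_1,r_2$ is invertible. *)

theory Defs
  imports "HOL-Algebra.Algebra"
begin

definition irreducible_elem :: "('a, 'm) ring_scheme \<Rightarrow> 'a \<Rightarrow> bool" where
  "irreducible_elem S r \<longleftrightarrow> r \<in> carrier S \<and> r \<noteq> \<zero>\<^bsub>S\<^esub> \<and> r \<notin> Units S \<and>
     (\<forall>r1\<in>carrier S. \<forall>r2\<in>carrier S. r = r1 \<otimes>\<^bsub>S\<^esub> r2 \<longrightarrow> r1 \<in> Units S \<or> r2 \<in> Units S)"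

definition var_u :: "('a, 'm) ring_scheme \<Rightarrow> nat \<Rightarrow> nat \<Rightarrow> 'a" where
  "var_u R = monom (UP (UP R)) (monom (UP R) \<one>\<^bsub>R\<^esub> 1) 0"

definition var_v :: "('a, 'm) ring_scheme \<Rightarrow> nat \<Rightarrow> nat \<Rightarrow> 'a" where
  "var_v R = monom (UP (UP R)) \<one>\<^bsub>UP R\<^esub> 1"

definition const2 :: "('a, 'm) ring_scheme \<Rightarrow> 'a \<Rightarrow> nat \<Rightarrow> nat \<Rightarrow> 'a" where
  "const2 R a = monom (UP (UP R)) (monom (UP R) a 0) 0"

definition uv_ideal :: "('a, 'm) ring_scheme \<Rightarrow> 'a \<Rightarrow> (nat \<Rightarrow> nat \<Rightarrow> 'a) set" where
  "uv_ideal R f = PIdl\<^bsub>UP (UP R)\<^esub> (var_u R \<otimes>\<^bsub>UP (UP R)\<^esub> var_v R \<ominus>\<^bsub>UP (UP R)\<^esub> const2 R f)"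

definition S_ring :: "('a, 'm) ring_scheme \<Rightarrow> 'a \<Rightarrow> (nat \<Rightarrow> nat \<Rightarrow> 'a) set ring" where
  "S_ring R f = UP (UP R) Quot uv_ideal R f"

definition img :: "('a, 'm) ring_scheme \<Rightarrow> 'a \<Rightarrow> (nat \<Rightarrow> nat \<Rightarrow> 'a) \<Rightarrow> (nat \<Rightarrow> nat \<Rightarrow> 'a) set" where
  "img R f p = uv_ideal R f +>\<^bsub>UP (UP R)\<^esub> p"

end

theory Submission
  imports Defs
begin

text \<open>
The substitution \<open>u \<mapsto> t\<close>, \<open>v \<mapsto> f t\<inverse>\<close> maps \<open>R[u,v]\<close> to the Laurent polynomials \<open>R[t,t\<inverse>]\<close>,
and its kernel is exactly \<open>(uv - f)\<close>: modulo this ideal every polynomial is congruent to one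
without mixed monomials \<open>u\<^sup>i v\<^sup>j\<close> (\<open>i, j > 0\<close>), and on those the substitution is injective because
\<open>f\<close> is not a zero divisor. So \<open>S\<close> is the subring of \<open>R[t,t\<inverse>]\<close> spanned by the \<open>t\<^sup>n\<close> and the
\<open>f\<^sup>k t\<^sup>-\<^sup>k\<close>, with \<open>u = t\<close> and \<open>v = f t\<inverse>\<close>. Over a domain, a factorisation of a monomial into
Laurent polynomials is a factorisation into monomials; since the coefficients of negative degree
are divisible by powers of the non-unit \<open>f\<close>, the only units of \<open>S\<close> are the unit constants, and
neither \<open>t\<close> nor \<open>f t\<inverse>\<close> splits into two non-units.
\<close>

lemma UP_coeff_self: "p \<in> carrier (UP R) \<Longrightarrow> coeff (UP R) p = p"
  by (auto simp: UP_def)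

lemma UP_induct_monom:
  assumes "ring R" and p: "p \<in> carrier (UP R)" and deg: "deg R p \<le> K"
    and zero: "Q \<zero>\<^bsub>UP R\<^esub>"
    and add: "\<And>a b. a \<in> carrier (UP R) \<Longrightarrow> b \<in> carrier (UP R) \<Longrightarrow> Q a \<Longrightarrow> Q b \<Longrightarrow>
      Q (a \<oplus>\<^bsub>UP R\<^esub> b)"
    and monom: "\<And>i. i \<le> K \<Longrightarrow> Q (monom (UP R) (p i) i)"
  shows "Q p"
proof -
  interpret U: UP_ring R "UP R" using \<open>ring R\<close> by (simp add: UP_ring_def)
  have coeffs: "p i \<in> carrier R" for i using U.coeff_closed[OF p, of i] by (simp add: UP_coeff_self[OF p])
  let ?g = "\<lambda>i. monom (UP R) (p i) i"
  have "A \<subseteq> {..K} \<Longrightarrow> Q (finsum (UP R) ?g A)" if "finite A" for A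
    using that
  proof (induction A rule: finite_induct)
    case (insert i A)
    then have "finsum (UP R) ?g (insert i A) = ?g i \<oplus>\<^bsub>UP R\<^esub> finsum (UP R) ?g A"
      using coeffs by (intro U.P.finsum_insert) auto
    moreover have "Q (?g i \<oplus>\<^bsub>UP R\<^esub> finsum (UP R) ?g A)"
      using insert coeffs by (intro add monom) auto
    ultimately show ?case by simp
  qed (simp add: zero)
  then have "Q (finsum (UP R) ?g {..K})" by simp
  then show ?thesis using U.up_repr_le[OF deg p] by (simp add: UP_coeff_self[OF p])
qed

lemma (in abelian_monoid) finsum_eq_single:
  assumes "finite A" "j \<in> A" "\<And>k. k \<in> A \<Longrightarrow> k \<noteq> j \<Longrightarrow> g k = \<zero>"
    and "g \<in> A \<rightarrow> carrier G"
  shows "finsum G g A = g j"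
proof -
  have "finsum G g A = (\<Oplus>k\<in>A. if j = k then g k else \<zero>)"
    by (rule finsum_cong') (use assms in auto)
  also have "\<dots> = g j"
    by (rule finsum_singleton) (use assms in auto)
  finally show ?thesis .
qed

lemma (in ideal) nat_pow_diff_closed:
  assumes x: "x \<in> carrier R" and y: "y \<in> carrier R" and xy: "x \<ominus> y \<in> I"
  shows "x [^] (k::nat) \<ominus> y [^] k \<in> I"
proof (induction k)
  case 0
  have "\<one> \<ominus> \<one> = \<zero>" by (simp add: r_right_minus_eq)
  then show ?case using additive_subgroup.zero_closed[OF additive_subgroup_axioms] nat_pow_0 by metis
next
  case (Suc k)
  have "x [^] Suc k \<ominus> y [^] Suc k = x [^] k \<otimes> (x \<ominus> y) \<oplus> (x [^] k \<ominus> y [^] k) \<otimes> y"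
    unfolding nat_pow_Suc using x y
    by (simp add: minus_eq r_distr l_distr r_minus l_minus a_assoc) (simp add: a_assoc[symmetric] l_neg)
  then show ?case using x y xy Suc.IH by (simp add: a_closed I_l_closed I_r_closed)
qed

text \<open>Laurent polynomials are coefficient functions \<open>\<int> \<Rightarrow> R\<close> with finite support; the product
is computed by a convolution over a window \<open>[-K, K]\<close> containing the support of the first factor.\<close>

abbreviation laurent_monom :: "('a, 'm) ring_scheme \<Rightarrow> int \<Rightarrow> 'a \<Rightarrow> int \<Rightarrow> 'a" where
  "laurent_monom R w \<gamma> \<equiv> \<lambda>n. if n = w then \<gamma> else \<zero>\<^bsub>R\<^esub>"

definition laurent_conv ::
  "('a, 'm) ring_scheme \<Rightarrow> nat \<Rightarrow> (int \<Rightarrow> 'a) \<Rightarrow> (int \<Rightarrow> 'a) \<Rightarrow> int \<Rightarrow> 'a" where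
  "laurent_conv R K g h n = (\<Oplus>\<^bsub>R\<^esub> m\<in>{- int K..int K}. g m \<otimes>\<^bsub>R\<^esub> h (n - m))"

context ring
begin

lemma laurent_conv_add_left:
  assumes "\<And>m. g1 m \<in> carrier R" "\<And>m. g2 m \<in> carrier R" "\<And>m. h m \<in> carrier R"
  shows "laurent_conv R K (\<lambda>m. g1 m \<oplus> g2 m) h =
    (\<lambda>n. laurent_conv R K g1 h n \<oplus> laurent_conv R K g2 h n)"
  unfolding laurent_conv_def
  by (subst finsum_addf[symmetric]) (auto intro!: finsum_cong' simp: assms l_distr)

lemma laurent_conv_add_right:
  assumes "\<And>m. g m \<in> carrier R" "\<And>m. h1 m \<in> carrier R" "\<And>m. h2 m \<in> carrier R"
  shows "laurent_conv R K g (\<lambda>m. h1 m \<oplus> h2 m) =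
    (\<lambda>n. laurent_conv R K g h1 n \<oplus> laurent_conv R K g h2 n)"
  unfolding laurent_conv_def
  by (subst finsum_addf[symmetric]) (auto intro!: finsum_cong' simp: assms r_distr)

lemma laurent_conv_zero_left:
  "(\<And>m. h m \<in> carrier R) \<Longrightarrow> laurent_conv R K (\<lambda>m. \<zero>) h = (\<lambda>n. \<zero>)"
  unfolding laurent_conv_def by (intro ext add.finprod_one_eqI) simp

lemma laurent_conv_zero_right:
  "(\<And>m. g m \<in> carrier R) \<Longrightarrow> laurent_conv R K g (\<lambda>m. \<zero>) = (\<lambda>n. \<zero>)"
  unfolding laurent_conv_def by (intro ext add.finprod_one_eqI) simp

lemma laurent_conv_eq_single:
  assumes A: "\<bar>A\<bar> \<le> int K"
    and other: "\<And>m. m \<noteq> A \<Longrightarrow> g m = \<zero> \<or> h (n - m) = \<zero>"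
    and g: "\<And>m. g m \<in> carrier R" and h: "\<And>m. h m \<in> carrier R"
  shows "laurent_conv R K g h n = g A \<otimes> h (n - A)"
  unfolding laurent_conv_def
proof (rule finsum_eq_single)
  fix m assume "m \<noteq> A"
  then show "g m \<otimes> h (n - m) = \<zero>" using other[of m] g[of m] h[of "n - m"] by auto
qed (use A g h in auto)

lemma laurent_conv_at_max:
  assumes g: "\<And>m. g m \<in> carrier R" and h: "\<And>m. h m \<in> carrier R" and "\<bar>A\<bar> \<le> int K"
    and above_g: "\<And>m. A < m \<Longrightarrow> g m = \<zero>" and above_h: "\<And>m. B < m \<Longrightarrow> h m = \<zero>"
  shows "laurent_conv R K g h (A + B) = g A \<otimes> h B"
proof -
  have "g m = \<zero> \<or> h (A + B - m) = \<zero>" if "m \<noteq> A" for m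
    using that above_g[of m] above_h[of "A + B - m"] by linarith
  then show ?thesis using laurent_conv_eq_single[OF \<open>\<bar>A\<bar> \<le> int K\<close> _ g h] by simp
qed

lemma laurent_conv_at_min:
  assumes g: "\<And>m. g m \<in> carrier R" and h: "\<And>m. h m \<in> carrier R" and "\<bar>A\<bar> \<le> int K"
    and below_g: "\<And>m. m < A \<Longrightarrow> g m = \<zero>" and below_h: "\<And>m. m < B \<Longrightarrow> h m = \<zero>"
  shows "laurent_conv R K g h (A + B) = g A \<otimes> h B"
proof -
  have "g m = \<zero> \<or> h (A + B - m) = \<zero>" if "m \<noteq> A" for m
    using that below_g[of m] below_h[of "A + B - m"] by linarith
  then show ?thesis using laurent_conv_eq_single[OF \<open>\<bar>A\<bar> \<le> int K\<close> _ g h] by simp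
qed

end

text \<open>The extreme coefficients of a product are the products of the extreme coefficients of the
factors, which are nonzero in a domain.\<close>

lemma (in domain) laurent_conv_eq_monom:
  assumes g: "\<And>m. g m \<in> carrier R" and h: "\<And>m. h m \<in> carrier R"
    and supp_g: "\<And>m. g m \<noteq> \<zero> \<Longrightarrow> \<bar>m\<bar> \<le> int K" and supp_h: "finite {m. h m \<noteq> \<zero>}"
    and conv: "laurent_conv R K g h = laurent_monom R w \<gamma>" and \<gamma>: "\<gamma> \<noteq> \<zero>"
  shows "\<exists>A B. A + B = w \<and> g = laurent_monom R A (g A) \<and> h = laurent_monom R B (h B) \<and>
    g A \<otimes> h B = \<gamma>"
proof -
  define SA SB where "SA = {m. g m \<noteq> \<zero>}" and "SB = {m. h m \<noteq> \<zero>}"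
  have "SA \<subseteq> {- int K..int K}" using supp_g by (force simp: SA_def)
  then have fin: "finite SA" "finite SB" using supp_h finite_subset by (auto simp: SB_def)
  have conv_w: "laurent_conv R K g h w = \<gamma>" using conv by simp
  have "g \<noteq> (\<lambda>m. \<zero>)" "h \<noteq> (\<lambda>m. \<zero>)"
    using conv_w \<gamma> laurent_conv_zero_left[OF h] laurent_conv_zero_right[OF g] by auto
  then have "SA \<noteq> {}" "SB \<noteq> {}" by (auto simp: SA_def SB_def)
  then have extremes: "Min SA \<in> SA" "Max SA \<in> SA" "Min SB \<in> SB" "Max SB \<in> SB"
    using fin by simp_all
  define a1 a2 b1 b2 where "a1 = Min SA" and "a2 = Max SA" and "b1 = Min SB" and "b2 = Max SB"
  have g_supp: "a1 \<le> m \<and> m \<le> a2" if "g m \<noteq> \<zero>" for m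
    using fin that by (simp add: a1_def a2_def SA_def)
  have h_supp: "b1 \<le> m \<and> m \<le> b2" if "h m \<noteq> \<zero>" for m
    using fin that by (simp add: b1_def b2_def SB_def)
  have nz: "g a1 \<noteq> \<zero>" "g a2 \<noteq> \<zero>" "h b1 \<noteq> \<zero>" "h b2 \<noteq> \<zero>"
    using extremes by (simp_all add: a1_def a2_def b1_def b2_def SA_def SB_def)
  have top: "laurent_conv R K g h (a2 + b2) = g a2 \<otimes> h b2"
    by (rule laurent_conv_at_max[OF g h supp_g[OF nz(2)]])
      (use g_supp h_supp in \<open>meson not_le\<close>)+
  have bot: "laurent_conv R K g h (a1 + b1) = g a1 \<otimes> h b1"
    by (rule laurent_conv_at_min[OF g h supp_g[OF nz(1)]])
      (use g_supp h_supp in \<open>meson not_le\<close>)+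
  have "g a2 \<otimes> h b2 \<noteq> \<zero>" "g a1 \<otimes> h b1 \<noteq> \<zero>"
    using nz g h by (simp_all add: integral_iff)
  then have w: "a2 + b2 = w" "a1 + b1 = w"
    using fun_cong[OF conv, of "a2 + b2"] fun_cong[OF conv, of "a1 + b1"] top bot
    by (auto split: if_splits)
  moreover have "a1 \<le> a2" "b1 \<le> b2" using g_supp[OF nz(1)] h_supp[OF nz(3)] by simp_all
  ultimately have "a1 = a2" "b1 = b2" by linarith+
  then have "g = laurent_monom R a2 (g a2)" "h = laurent_monom R b2 (h b2)"
    using g_supp h_supp by (force intro!: ext)+
  moreover have "g a2 \<otimes> h b2 = \<gamma>" using fun_cong[OF conv, of "a2 + b2"] top w(1) by simp
  ultimately show ?thesis using w(1) by blast
qed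

text \<open>The coefficient of \<open>t\<^sup>n\<close> in the image of \<open>p\<close> under \<open>u \<mapsto> t\<close>, \<open>v \<mapsto> f t\<inverse>\<close>. Here \<open>p j i\<close> is
the coefficient of \<open>u\<^sup>i v\<^sup>j\<close> (the outer variable of \<open>R[u][v]\<close> is \<open>v\<close>), which contributes
\<open>p j i f\<^sup>j\<close> to \<open>t\<^sup>i\<^sup>-\<^sup>j\<close>; \<open>K\<close> is any bound on the degree in \<open>v\<close>.\<close>

definition laurent_upto ::
  "('a, 'm) ring_scheme \<Rightarrow> 'a \<Rightarrow> nat \<Rightarrow> (nat \<Rightarrow> nat \<Rightarrow> 'a) \<Rightarrow> int \<Rightarrow> 'a" where
  "laurent_upto R f K p n =
    (\<Oplus>\<^bsub>R\<^esub> j\<in>{..K}. if 0 \<le> n + int j then p j (nat (n + int j)) \<otimes>\<^bsub>R\<^esub> f [^]\<^bsub>R\<^esub> j else \<zero>\<^bsub>R\<^esub>)"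

definition laurent :: "('a, 'm) ring_scheme \<Rightarrow> 'a \<Rightarrow> (nat \<Rightarrow> nat \<Rightarrow> 'a) \<Rightarrow> int \<Rightarrow> 'a" where
  "laurent R f p = laurent_upto R f (deg (UP R) p) p"

locale uv_quotient =
  fixes R :: "('a, 'm) ring_scheme" and f :: 'a
  assumes domain: "domain R" and f_carrier: "f \<in> carrier R" and f_nonzero: "f \<noteq> \<zero>\<^bsub>R\<^esub>"
begin

sublocale R: domain R by (rule domain)
sublocale Ru: UP_domain R "UP R" by unfold_locales
sublocale P: UP_domain "UP R" "UP (UP R)" using UP_domain.intro[OF Ru.UP_domain] by simp

abbreviation P where "P \<equiv> UP (UP R)"
abbreviation L where "L \<equiv> laurent R f"
abbreviation I where "I \<equiv> uv_ideal R f"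
abbreviation S where "S \<equiv> S_ring R f"

definition uv_monom :: "'a \<Rightarrow> nat \<Rightarrow> nat \<Rightarrow> nat \<Rightarrow> nat \<Rightarrow> 'a" where
  "uv_monom a i j = monom P (monom (UP R) a i) j"

lemma coeff_v_closed: "p \<in> carrier P \<Longrightarrow> p j \<in> carrier (UP R)"
  using P.coeff_closed[of p j] by (simp add: UP_coeff_self)

lemma coeff_uv_closed [simp]: "p \<in> carrier P \<Longrightarrow> p j i \<in> carrier R"
  using Ru.coeff_closed[OF coeff_v_closed[of p j], of i] coeff_v_closed[of p j]
  by (simp add: UP_coeff_self)

text \<open>The following coefficient equations are not \<open>[simp]\<close>: the simplifier would use them to
rewrite polynomials into \<open>\<lambda>\<close>-terms.\<close>

lemma coeff_uv_add:
  assumes p: "p \<in> carrier P" and q: "q \<in> carrier P"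
  shows "(p \<oplus>\<^bsub>P\<^esub> q) j i = p j i \<oplus>\<^bsub>R\<^esub> q j i"
proof -
  have pj: "p j \<in> carrier (UP R)" and qj: "q j \<in> carrier (UP R)"
    using p q by (simp_all add: coeff_v_closed)
  have "(p \<oplus>\<^bsub>P\<^esub> q) j = p j \<oplus>\<^bsub>UP R\<^esub> q j"
    using P.coeff_add[OF p q, of j] by (simp add: UP_coeff_self p q)
  moreover have "(p j \<oplus>\<^bsub>UP R\<^esub> q j) i = p j i \<oplus>\<^bsub>R\<^esub> q j i"
    using Ru.coeff_add[OF pj qj, of i] by (simp add: UP_coeff_self pj qj)
  ultimately show ?thesis by simp
qed

lemma coeff_v_zero: "\<zero>\<^bsub>P\<^esub> j = \<zero>\<^bsub>UP R\<^esub>"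
  using P.coeff_zero[of j] by (simp add: UP_coeff_self)

lemma coeff_u_zero: "\<zero>\<^bsub>UP R\<^esub> i = \<zero>\<^bsub>R\<^esub>"
  using Ru.coeff_zero[of i] by (simp add: UP_coeff_self)

lemma coeff_uv_above_deg: "p \<in> carrier P \<Longrightarrow> deg (UP R) p < j \<Longrightarrow> p j i = \<zero>\<^bsub>R\<^esub>"
  using P.deg_aboveD[of p j] by (simp add: UP_coeff_self coeff_u_zero)

lemma uv_monom_closed [simp]: "a \<in> carrier R \<Longrightarrow> uv_monom a i j \<in> carrier P"
  by (simp add: uv_monom_def)

lemma coeff_uv_monom:
  assumes a: "a \<in> carrier R"
  shows "uv_monom a i j l k = (if l = j \<and> k = i then a else \<zero>\<^bsub>R\<^esub>)"
proof -
  have m: "monom (UP R) a i \<in> carrier (UP R)" using a by simp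
  have "uv_monom a i j l = (if j = l then monom (UP R) a i else \<zero>\<^bsub>UP R\<^esub>)"
    using P.coeff_monom[OF m, of j l] UP_coeff_self[OF P.monom_closed[OF m, of j]]
    by (simp add: uv_monom_def)
  moreover have "monom (UP R) a i k = (if i = k then a else \<zero>\<^bsub>R\<^esub>)"
    using Ru.coeff_monom[OF a, of i k] by (simp add: UP_coeff_self m)
  ultimately show ?thesis by (auto simp: coeff_u_zero)
qed

lemma deg_uv_monom: "a \<in> carrier R \<Longrightarrow> deg (UP R) (uv_monom a i j) \<le> j"
  unfolding uv_monom_def by (simp add: P.deg_monom_le)

lemma uv_monom_mult:
  "a \<in> carrier R \<Longrightarrow> b \<in> carrier R \<Longrightarrow>
    uv_monom a i j \<otimes>\<^bsub>P\<^esub> uv_monom b k l = uv_monom (a \<otimes>\<^bsub>R\<^esub> b) (i + k) (j + l)"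
  unfolding uv_monom_def by simp

lemma uv_monom_pow:
  "a \<in> carrier R \<Longrightarrow> uv_monom a i j [^]\<^bsub>P\<^esub> k = uv_monom (a [^]\<^bsub>R\<^esub> k) (i * k) (j * k)"
  unfolding uv_monom_def by (simp add: P.monom_pow Ru.monom_pow)

lemma uv_monom_induct [consumes 3, case_names zero add monom]:
  assumes p: "p \<in> carrier P" and deg: "deg (UP R) p \<le> K" "\<And>j. deg R (p j) \<le> K"
    and zero: "Q \<zero>\<^bsub>P\<^esub>"
    and add: "\<And>a b. a \<in> carrier P \<Longrightarrow> b \<in> carrier P \<Longrightarrow> Q a \<Longrightarrow> Q b \<Longrightarrow> Q (a \<oplus>\<^bsub>P\<^esub> b)"
    and monom: "\<And>i j. i \<le> K \<Longrightarrow> j \<le> K \<Longrightarrow> Q (uv_monom (p j i) i j)"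
  shows "Q p"
proof (rule UP_induct_monom[OF Ru.UP_ring p deg(1), of Q, OF zero add])
  fix j assume j: "j \<le> K"
  have pj: "p j \<in> carrier (UP R)" using p by (rule coeff_v_closed)
  show "Q (monom P (p j) j)"
  proof (rule UP_induct_monom[OF R.ring_axioms pj deg(2), of "\<lambda>a. Q (monom P a j)"])
    fix i assume "i \<le> K"
    then show "Q (monom P (monom (UP R) (p j i) i) j)"
      using monom[OF _ j] by (simp add: uv_monom_def)
  qed (use zero add in simp_all)
qed auto

lemma uv_deg_bound:
  assumes p: "p \<in> carrier P"
  shows "\<exists>K. deg (UP R) p \<le> K \<and> (\<forall>j. deg R (p j) \<le> K)"
proof (intro exI conjI allI)
  define K where "K = max (deg (UP R) p) (Max ((\<lambda>j. deg R (p j)) ` {..deg (UP R) p}))"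
  show "deg (UP R) p \<le> K" by (simp add: K_def)
  fix j
  show "deg R (p j) \<le> K"
  proof (cases "j \<le> deg (UP R) p")
    case True
    then have "deg R (p j) \<le> Max ((\<lambda>j. deg R (p j)) ` {..deg (UP R) p})"
      by (intro Max_ge) simp_all
    then show ?thesis by (simp add: K_def)
  next
    case False
    then have "p j = \<zero>\<^bsub>UP R\<^esub>"
      using P.deg_aboveD[OF _ p, of j] by (simp add: UP_coeff_self[OF p])
    then show ?thesis by simp
  qed
qed

lemma laurent_closed [simp]: "p \<in> carrier P \<Longrightarrow> L p n \<in> carrier R"
  unfolding laurent_def laurent_upto_def by (intro R.finsum_closed) (auto simp: f_carrier)

lemma laurent_upto_eq:
  assumes p: "p \<in> carrier P" and deg: "deg (UP R) p \<le> K"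
  shows "laurent_upto R f K p n = L p n"
  unfolding laurent_def laurent_upto_def
  by (rule R.add.finprod_mono_neutral_cong_right)
    (use p deg in \<open>auto simp: coeff_uv_above_deg f_carrier\<close>)

lemma laurent_uv_monom:
  assumes a: "a \<in> carrier R"
  shows "L (uv_monom a i j) = laurent_monom R (int i - int j) (a \<otimes>\<^bsub>R\<^esub> f [^]\<^bsub>R\<^esub> j)"
proof
  fix n
  have "L (uv_monom a i j) n = laurent_upto R f j (uv_monom a i j) n"
    using laurent_upto_eq[OF uv_monom_closed[OF a] deg_uv_monom[OF a]] by simp
  also have "\<dots> = (if 0 \<le> n + int j then uv_monom a i j j (nat (n + int j)) \<otimes>\<^bsub>R\<^esub> f [^]\<^bsub>R\<^esub> j
      else \<zero>\<^bsub>R\<^esub>)"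
    unfolding laurent_upto_def by (rule R.finsum_eq_single) (auto simp: a f_carrier coeff_uv_monom)
  also have "\<dots> = laurent_monom R (int i - int j) (a \<otimes>\<^bsub>R\<^esub> f [^]\<^bsub>R\<^esub> j) n"
    using a f_carrier by (auto simp: coeff_uv_monom)
  finally show "L (uv_monom a i j) n = laurent_monom R (int i - int j) (a \<otimes>\<^bsub>R\<^esub> f [^]\<^bsub>R\<^esub> j) n" .
qed

lemma laurent_zero: "L \<zero>\<^bsub>P\<^esub> = (\<lambda>n. \<zero>\<^bsub>R\<^esub>)"
  unfolding laurent_def laurent_upto_def
  by (intro ext R.add.finprod_one_eqI) (simp add: f_carrier coeff_v_zero coeff_u_zero)

lemma laurent_add:
  assumes p: "p \<in> carrier P" and q: "q \<in> carrier P"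
  shows "L (p \<oplus>\<^bsub>P\<^esub> q) = (\<lambda>n. L p n \<oplus>\<^bsub>R\<^esub> L q n)"
proof
  fix n
  define K where "K = max (deg (UP R) p) (deg (UP R) q)"
  have "L (p \<oplus>\<^bsub>P\<^esub> q) n = laurent_upto R f K (p \<oplus>\<^bsub>P\<^esub> q) n"
    using laurent_upto_eq[of "p \<oplus>\<^bsub>P\<^esub> q" K] P.deg_add[OF p q] p q by (simp add: K_def)
  also have "\<dots> = laurent_upto R f K p n \<oplus>\<^bsub>R\<^esub> laurent_upto R f K q n"
    unfolding laurent_upto_def
  proof (subst R.finsum_addf[symmetric])
    show "(\<Oplus>\<^bsub>R\<^esub>j\<in>{..K}. if 0 \<le> n + int j
          then (p \<oplus>\<^bsub>P\<^esub> q) j (nat (n + int j)) \<otimes>\<^bsub>R\<^esub> f [^]\<^bsub>R\<^esub> j else \<zero>\<^bsub>R\<^esub>) =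
        (\<Oplus>\<^bsub>R\<^esub>j\<in>{..K}.
          (if 0 \<le> n + int j then p j (nat (n + int j)) \<otimes>\<^bsub>R\<^esub> f [^]\<^bsub>R\<^esub> j else \<zero>\<^bsub>R\<^esub>) \<oplus>\<^bsub>R\<^esub>
          (if 0 \<le> n + int j then q j (nat (n + int j)) \<otimes>\<^bsub>R\<^esub> f [^]\<^bsub>R\<^esub> j else \<zero>\<^bsub>R\<^esub>))"
      by (rule R.finsum_cong') (auto simp: p q f_carrier R.l_distr coeff_uv_add)
  qed (auto simp: p q f_carrier)
  also have "\<dots> = L p n \<oplus>\<^bsub>R\<^esub> L q n"
    using laurent_upto_eq p q by (simp add: K_def)
  finally show "L (p \<oplus>\<^bsub>P\<^esub> q) n = L p n \<oplus>\<^bsub>R\<^esub> L q n" .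
qed

lemma laurent_minus:
  assumes p: "p \<in> carrier P" and q: "q \<in> carrier P"
  shows "L (p \<ominus>\<^bsub>P\<^esub> q) n = L p n \<ominus>\<^bsub>R\<^esub> L q n"
proof -
  have pq: "p \<ominus>\<^bsub>P\<^esub> q \<in> carrier P" using p q by simp
  have cancel: "(p \<ominus>\<^bsub>P\<^esub> q) \<oplus>\<^bsub>P\<^esub> q = p" using p q by algebra
  have "L (p \<ominus>\<^bsub>P\<^esub> q) n \<oplus>\<^bsub>R\<^esub> L q n = L ((p \<ominus>\<^bsub>P\<^esub> q) \<oplus>\<^bsub>P\<^esub> q) n"
    by (simp only: laurent_add[OF pq q])
  also have "\<dots> = L p n" by (simp only: cancel)
  finally show ?thesis
    using R.add.inv_solve_right[of "L (p \<ominus>\<^bsub>P\<^esub> q) n" "L p n" "L q n"] pq p q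
    by (simp add: a_minus_def)
qed

lemma laurent_support:
  assumes p: "p \<in> carrier P" and deg: "deg (UP R) p \<le> K" "\<And>j. deg R (p j) \<le> K"
  shows "L p m \<noteq> \<zero>\<^bsub>R\<^esub> \<Longrightarrow> \<bar>m\<bar> \<le> int K"
  using p deg
proof (induction p arbitrary: m rule: uv_monom_induct)
  case (add a b)
  then have "L a m \<noteq> \<zero>\<^bsub>R\<^esub> \<or> L b m \<noteq> \<zero>\<^bsub>R\<^esub>" by (auto simp: laurent_add)
  then show ?case using add(3,4) by blast
next
  case (monom i j)
  then show ?case using p by (auto simp: laurent_uv_monom split: if_splits)
qed (simp add: laurent_zero)

lemma laurent_mult_uv_monoms:
  assumes a: "a \<in> carrier R" and b: "b \<in> carrier R" and "i \<le> K" "j \<le> K"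
  shows "L (uv_monom a i j \<otimes>\<^bsub>P\<^esub> uv_monom b k l) =
    laurent_conv R K (L (uv_monom a i j)) (L (uv_monom b k l))"
proof
  fix n
  have "laurent_conv R K (L (uv_monom a i j)) (L (uv_monom b k l)) n =
      L (uv_monom a i j) (int i - int j) \<otimes>\<^bsub>R\<^esub> L (uv_monom b k l) (n - (int i - int j))"
    by (rule R.laurent_conv_eq_single) (use a b f_carrier \<open>i \<le> K\<close> \<open>j \<le> K\<close> in \<open>auto simp: laurent_uv_monom\<close>)
  also have "\<dots> = L (uv_monom a i j \<otimes>\<^bsub>P\<^esub> uv_monom b k l) n"
    using a b f_carrier
    by (auto simp: uv_monom_mult laurent_uv_monom R.nat_pow_mult[symmetric] R.m_ac)
  finally show "L (uv_monom a i j \<otimes>\<^bsub>P\<^esub> uv_monom b k l) n =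
      laurent_conv R K (L (uv_monom a i j)) (L (uv_monom b k l)) n" ..
qed

lemma laurent_mult_uv_monom_left:
  assumes a: "a \<in> carrier R" and "i \<le> K" "j \<le> K" and q: "q \<in> carrier P"
  shows "L (uv_monom a i j \<otimes>\<^bsub>P\<^esub> q) = laurent_conv R K (L (uv_monom a i j)) (L q)"
proof -
  obtain K' where "deg (UP R) q \<le> K'" "\<And>j. deg R (q j) \<le> K'" using uv_deg_bound[OF q] by blast
  with q show ?thesis
  proof (induction q rule: uv_monom_induct)
    case zero
    then show ?case using a by (simp add: laurent_zero R.laurent_conv_zero_right)
  next
    case (add x y)
    then show ?case
      using a by (simp add: P.r_distr laurent_add R.laurent_conv_add_right)
  next
    case (monom i' j')
    then show ?case using laurent_mult_uv_monoms a q \<open>i \<le> K\<close> \<open>j \<le> K\<close> by simp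
  qed
qed

lemma laurent_mult:
  assumes p: "p \<in> carrier P" and q: "q \<in> carrier P"
    and deg: "deg (UP R) p \<le> K" "\<And>j. deg R (p j) \<le> K"
  shows "L (p \<otimes>\<^bsub>P\<^esub> q) = laurent_conv R K (L p) (L q)"
  using p deg
proof (induction p rule: uv_monom_induct)
  case zero
  then show ?case using q by (simp add: laurent_zero R.laurent_conv_zero_left)
next
  case (add x y)
  then show ?case using q by (simp add: P.l_distr laurent_add R.laurent_conv_add_left)
next
  case (monom i j)
  then show ?case using laurent_mult_uv_monom_left p q by simp
qed

lemma one_eq_uv_monom: "\<one>\<^bsub>P\<^esub> = uv_monom \<one>\<^bsub>R\<^esub> 0 0"
  unfolding uv_monom_def by simp

lemma var_u_eq: "var_u R = uv_monom \<one>\<^bsub>R\<^esub> 1 0"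
  unfolding var_u_def uv_monom_def ..

lemma var_v_eq: "var_v R = uv_monom \<one>\<^bsub>R\<^esub> 0 1"
  unfolding var_v_def uv_monom_def by simp

lemma uv_ideal_eq: "I = PIdl\<^bsub>P\<^esub> (uv_monom \<one>\<^bsub>R\<^esub> 1 1 \<ominus>\<^bsub>P\<^esub> uv_monom f 0 0)"
  unfolding uv_ideal_def var_u_eq var_v_eq const2_def
  using uv_monom_mult[of "\<one>\<^bsub>R\<^esub>" "\<one>\<^bsub>R\<^esub>" 1 0 0 1] by (simp add: uv_monom_def)

sublocale I: ideal I P
  unfolding uv_ideal_eq by (rule P.cgenideal_ideal) (simp add: f_carrier)

lemma laurent_ideal:
  assumes x: "x \<in> I"
  shows "L x = (\<lambda>n. \<zero>\<^bsub>R\<^esub>)"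
proof -
  let ?g = "uv_monom \<one>\<^bsub>R\<^esub> 1 1 \<ominus>\<^bsub>P\<^esub> uv_monom f 0 0"
  have g: "?g \<in> carrier P" using f_carrier by simp
  obtain y where y: "y \<in> carrier P" and xy: "x = y \<otimes>\<^bsub>P\<^esub> ?g"
    using x unfolding uv_ideal_eq cgenideal_def by blast
  obtain K where K: "deg (UP R) y \<le> K" "\<And>j. deg R (y j) \<le> K" using uv_deg_bound[OF y] by blast
  have "L ?g = (\<lambda>n. \<zero>\<^bsub>R\<^esub>)"
    using f_carrier by (auto simp: laurent_minus laurent_uv_monom)
  then show ?thesis
    unfolding xy laurent_mult[OF y g K] using y by (simp add: R.laurent_conv_zero_right)
qed

definition unmixed :: "(nat \<Rightarrow> nat \<Rightarrow> 'a) \<Rightarrow> bool" where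
  "unmixed q \<longleftrightarrow> (\<forall>i j. 0 < i \<longrightarrow> 0 < j \<longrightarrow> q j i = \<zero>\<^bsub>R\<^esub>)"

lemma unmixed_zero: "unmixed \<zero>\<^bsub>P\<^esub>"
  unfolding unmixed_def by (simp add: coeff_v_zero coeff_u_zero)

lemma uv_monom_cong_unmixed:
  assumes r: "r \<in> carrier R" and m: "m = min i j"
  shows "uv_monom r i j \<ominus>\<^bsub>P\<^esub> uv_monom (r \<otimes>\<^bsub>R\<^esub> f [^]\<^bsub>R\<^esub> m) (i - m) (j - m) \<in> I"
proof -
  define Z where "Z = uv_monom r (i - m) (j - m)"
  define U where "U = uv_monom \<one>\<^bsub>R\<^esub> 1 1"
  define F where "F = uv_monom f 0 0"
  have closed: "Z \<in> carrier P" "U \<in> carrier P" "F \<in> carrier P"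
    using r f_carrier by (simp_all add: Z_def U_def F_def)
  have "uv_monom r i j = Z \<otimes>\<^bsub>P\<^esub> U [^]\<^bsub>P\<^esub> m"
    using r m by (simp add: Z_def U_def uv_monom_pow uv_monom_mult)
  moreover have "uv_monom (r \<otimes>\<^bsub>R\<^esub> f [^]\<^bsub>R\<^esub> m) (i - m) (j - m) = Z \<otimes>\<^bsub>P\<^esub> F [^]\<^bsub>P\<^esub> m"
    using r f_carrier by (simp add: Z_def F_def uv_monom_pow uv_monom_mult)
  moreover have "Z \<otimes>\<^bsub>P\<^esub> U [^]\<^bsub>P\<^esub> m \<ominus>\<^bsub>P\<^esub> Z \<otimes>\<^bsub>P\<^esub> F [^]\<^bsub>P\<^esub> m =
      Z \<otimes>\<^bsub>P\<^esub> (U [^]\<^bsub>P\<^esub> m \<ominus>\<^bsub>P\<^esub> F [^]\<^bsub>P\<^esub> m)"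
    using closed by (simp add: a_minus_def P.r_distr P.r_minus)
  moreover have "U \<ominus>\<^bsub>P\<^esub> F \<in> I"
    unfolding uv_ideal_eq U_def F_def using closed by (intro P.cgenideal_self) (simp_all add: U_def F_def)
  then have "Z \<otimes>\<^bsub>P\<^esub> (U [^]\<^bsub>P\<^esub> m \<ominus>\<^bsub>P\<^esub> F [^]\<^bsub>P\<^esub> m) \<in> I"
    using closed by (intro I.I_l_closed I.nat_pow_diff_closed) simp_all
  ultimately show ?thesis by simp
qed

lemma exists_unmixed_cong:
  assumes p: "p \<in> carrier P"
  shows "\<exists>q\<in>carrier P. unmixed q \<and> p \<ominus>\<^bsub>P\<^esub> q \<in> I"
proof -
  obtain K where "deg (UP R) p \<le> K" "\<And>j. deg R (p j) \<le> K" using uv_deg_bound[OF p] by blast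
  with p show ?thesis
  proof (induction p rule: uv_monom_induct)
    case zero
    have "\<zero>\<^bsub>P\<^esub> \<ominus>\<^bsub>P\<^esub> \<zero>\<^bsub>P\<^esub> \<in> I" by (simp add: I.a_inv_closed a_minus_def)
    then show ?case using unmixed_zero by blast
  next
    case (add a b)
    then obtain qa qb where q: "qa \<in> carrier P" "unmixed qa" "a \<ominus>\<^bsub>P\<^esub> qa \<in> I"
      "qb \<in> carrier P" "unmixed qb" "b \<ominus>\<^bsub>P\<^esub> qb \<in> I" by blast
    have "(a \<oplus>\<^bsub>P\<^esub> b) \<ominus>\<^bsub>P\<^esub> (qa \<oplus>\<^bsub>P\<^esub> qb) =
        (a \<ominus>\<^bsub>P\<^esub> qa) \<oplus>\<^bsub>P\<^esub> (b \<ominus>\<^bsub>P\<^esub> qb)"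
      using add q by algebra
    moreover have "unmixed (qa \<oplus>\<^bsub>P\<^esub> qb)" using q by (simp add: unmixed_def coeff_uv_add)
    ultimately show ?case using q by (intro bexI[of _ "qa \<oplus>\<^bsub>P\<^esub> qb"]) (simp_all add: I.a_closed)
  next
    case (monom i j)
    let ?r = "p j i" and ?m = "min i j"
    have r: "?r \<in> carrier R" using p by simp
    have "unmixed (uv_monom (?r \<otimes>\<^bsub>R\<^esub> f [^]\<^bsub>R\<^esub> ?m) (i - ?m) (j - ?m))"
      using r f_carrier by (auto simp: unmixed_def coeff_uv_monom)
    then show ?case
      using uv_monom_cong_unmixed[OF r refl] r f_carrier
      by (intro bexI[of _ "uv_monom (?r \<otimes>\<^bsub>R\<^esub> f [^]\<^bsub>R\<^esub> ?m) (i - ?m) (j - ?m)"]) simp_all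
  qed
qed

lemma laurent_unmixed_single:
  assumes q: "q \<in> carrier P" and "unmixed q" and j0: "0 \<le> n + int j0"
    and others: "\<And>k. 0 \<le> n + int k \<Longrightarrow> k \<noteq> j0 \<Longrightarrow> 0 < k \<and> 0 < nat (n + int k)"
  shows "L q n = q j0 (nat (n + int j0)) \<otimes>\<^bsub>R\<^esub> f [^]\<^bsub>R\<^esub> j0"
proof -
  define K where "K = max (deg (UP R) q) j0"
  have "L q n = laurent_upto R f K q n" using laurent_upto_eq[OF q, of K n] by (simp add: K_def)
  also have "\<dots> = (if 0 \<le> n + int j0 then q j0 (nat (n + int j0)) \<otimes>\<^bsub>R\<^esub> f [^]\<^bsub>R\<^esub> j0
      else \<zero>\<^bsub>R\<^esub>)"
    unfolding laurent_upto_def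
  proof (rule R.finsum_eq_single)
    fix k assume "k \<in> {..K}" "k \<noteq> j0"
    then show "(if 0 \<le> n + int k then q k (nat (n + int k)) \<otimes>\<^bsub>R\<^esub> f [^]\<^bsub>R\<^esub> k else \<zero>\<^bsub>R\<^esub>) = \<zero>\<^bsub>R\<^esub>"
      using \<open>unmixed q\<close> others[of k] f_carrier by (auto simp: unmixed_def)
  qed (use q f_carrier in \<open>auto simp: K_def\<close>)
  finally show ?thesis using j0 by simp
qed

lemma laurent_unmixed_nonneg: "q \<in> carrier P \<Longrightarrow> unmixed q \<Longrightarrow> L q (int i) = q 0 i"
  using laurent_unmixed_single[of q "int i" 0] f_carrier by simp

lemma laurent_unmixed_nonpos:
  "q \<in> carrier P \<Longrightarrow> unmixed q \<Longrightarrow> L q (- int j) = q j 0 \<otimes>\<^bsub>R\<^esub> f [^]\<^bsub>R\<^esub> j"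
  using laurent_unmixed_single[of q "- int j" j] by simp

lemma f_pow_nonzero: "f [^]\<^bsub>R\<^esub> (k::nat) \<noteq> \<zero>\<^bsub>R\<^esub>"
  by (induction k) (auto simp: f_carrier f_nonzero R.integral_iff)

lemma ideal_of_laurent_zero:
  assumes p: "p \<in> carrier P" and zero: "L p = (\<lambda>n. \<zero>\<^bsub>R\<^esub>)"
  shows "p \<in> I"
proof -
  obtain q where q: "q \<in> carrier P" "unmixed q" "p \<ominus>\<^bsub>P\<^esub> q \<in> I"
    using exists_unmixed_cong[OF p] by blast
  have "L q = (\<lambda>n. \<zero>\<^bsub>R\<^esub>)"
    using laurent_ideal[OF q(3)] zero p q(1) by (auto simp: laurent_minus fun_eq_iff)
  have "q j i = \<zero>\<^bsub>R\<^esub>" for i j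
  proof (cases "i = 0")
    case True
    have "q j 0 \<otimes>\<^bsub>R\<^esub> f [^]\<^bsub>R\<^esub> j = \<zero>\<^bsub>R\<^esub>"
      using laurent_unmixed_nonpos[OF q(1,2), of j] \<open>L q = (\<lambda>n. \<zero>\<^bsub>R\<^esub>)\<close> by simp
    then show ?thesis using True q(1) f_carrier f_pow_nonzero[of j] by (simp add: R.integral_iff)
  next
    case False
    show ?thesis
    proof (cases "j = 0")
      case True
      then show ?thesis
        using laurent_unmixed_nonneg[OF q(1,2), of i] \<open>L q = (\<lambda>n. \<zero>\<^bsub>R\<^esub>)\<close> by simp
    qed (use False q(2) in \<open>simp add: unmixed_def\<close>)
  qed
  then have "q = \<zero>\<^bsub>P\<^esub>" by (auto intro!: ext simp: coeff_v_zero coeff_u_zero)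
  then show ?thesis using q(3) p by (simp add: a_minus_def)
qed

lemma cong_iff_laurent_eq:
  assumes x: "x \<in> carrier P" and y: "y \<in> carrier P"
  shows "x \<ominus>\<^bsub>P\<^esub> y \<in> I \<longleftrightarrow> L x = L y"
proof -
  have "L x n \<ominus>\<^bsub>R\<^esub> L y n = \<zero>\<^bsub>R\<^esub> \<longleftrightarrow> L x n = L y n" for n
    using x y by (simp add: R.r_right_minus_eq)
  then have "L (x \<ominus>\<^bsub>P\<^esub> y) = (\<lambda>n. \<zero>\<^bsub>R\<^esub>) \<longleftrightarrow> L x = L y"
    using laurent_minus[OF x y] by (simp add: fun_eq_iff)
  then show ?thesis
    using laurent_ideal[of "x \<ominus>\<^bsub>P\<^esub> y"] ideal_of_laurent_zero[OF P.minus_closed[OF x y]]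
    by blast
qed

text \<open>The coefficients that can occur at \<open>t\<^sup>n\<close> in the image of \<open>S\<close>: at \<open>t\<^sup>-\<^sup>k\<close> only multiples of
\<open>f\<^sup>k\<close>.\<close>

definition S_coeff :: "int \<Rightarrow> 'a \<Rightarrow> bool" where
  "S_coeff n \<alpha> \<longleftrightarrow> (\<forall>k. n = - int k \<longrightarrow> (\<exists>r\<in>carrier R. \<alpha> = r \<otimes>\<^bsub>R\<^esub> f [^]\<^bsub>R\<^esub> k))"

lemma S_coeff_laurent:
  assumes p: "p \<in> carrier P"
  shows "S_coeff n (L p n)"
  unfolding S_coeff_def
proof (intro allI impI)
  fix k assume n: "n = - int k"
  obtain q where q: "q \<in> carrier P" "unmixed q" "p \<ominus>\<^bsub>P\<^esub> q \<in> I"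
    using exists_unmixed_cong[OF p] by blast
  then have "L p n = q k 0 \<otimes>\<^bsub>R\<^esub> f [^]\<^bsub>R\<^esub> k"
    using cong_iff_laurent_eq p laurent_unmixed_nonpos n by simp
  then show "\<exists>r\<in>carrier R. L p n = r \<otimes>\<^bsub>R\<^esub> f [^]\<^bsub>R\<^esub> k" using q(1) by auto
qed

lemma laurent_factor_monom:
  assumes a: "a \<in> carrier P" and b: "b \<in> carrier P"
    and ab: "L (a \<otimes>\<^bsub>P\<^esub> b) = laurent_monom R w \<gamma>" and \<gamma>: "\<gamma> \<noteq> \<zero>\<^bsub>R\<^esub>"
  shows "\<exists>A B. A + B = w \<and> L a = laurent_monom R A (L a A) \<and> L b = laurent_monom R B (L b B) \<and>
    L a A \<otimes>\<^bsub>R\<^esub> L b B = \<gamma>"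
proof -
  obtain K where K: "deg (UP R) a \<le> K" "\<And>j. deg R (a j) \<le> K" using uv_deg_bound[OF a] by blast
  obtain K' where K': "deg (UP R) b \<le> K'" "\<And>j. deg R (b j) \<le> K'" using uv_deg_bound[OF b] by blast
  have "{m. L b m \<noteq> \<zero>\<^bsub>R\<^esub>} \<subseteq> {- int K'..int K'}" using laurent_support[OF b K'] by force
  then have fin: "finite {m. L b m \<noteq> \<zero>\<^bsub>R\<^esub>}" by (rule finite_subset) simp
  have conv: "laurent_conv R K (L a) (L b) = laurent_monom R w \<gamma>"
    using laurent_mult[OF a b K] ab by simp
  show ?thesis
    by (rule R.laurent_conv_eq_monom[OF _ _ _ fin conv \<gamma>]) (use a b laurent_support[OF a K] in simp_all)
qed

lemma img_hom: "img R f \<in> ring_hom P S"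
proof -
  have "img R f = (+>\<^bsub>P\<^esub>) I" by (intro ext) (simp add: img_def)
  then show ?thesis unfolding S_ring_def using I.rcos_ring_hom by simp
qed

lemma S_cring: "cring S"
  unfolding S_ring_def by (rule I.quotient_is_cring[OF P.UP_cring])

lemma img_surj: "Y \<in> carrier S \<Longrightarrow> \<exists>a\<in>carrier P. Y = img R f a"
  unfolding S_ring_def FactRing_def A_RCOSETS_def' img_def by auto

lemma img_eq_iff:
  assumes x: "x \<in> carrier P" and y: "y \<in> carrier P"
  shows "img R f x = img R f y \<longleftrightarrow> L x = L y"
  using P.quotient_eq_iff_same_a_r_cos[OF I.is_ideal x y] cong_iff_laurent_eq[OF x y]
  by (simp add: img_def)

context
  assumes f_not_unit: "f \<notin> Units R"
begin

lemma f_pow_multiple_not_unit: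
  assumes r: "r \<in> carrier R" and "0 < k"
  shows "r \<otimes>\<^bsub>R\<^esub> f [^]\<^bsub>R\<^esub> (k::nat) \<notin> Units R"
proof
  obtain k' where k: "k = Suc k'" using \<open>0 < k\<close> by (cases k) auto
  assume "r \<otimes>\<^bsub>R\<^esub> f [^]\<^bsub>R\<^esub> k \<in> Units R"
  then have "f \<otimes>\<^bsub>R\<^esub> (r \<otimes>\<^bsub>R\<^esub> f [^]\<^bsub>R\<^esub> k') \<in> Units R"
    using r f_carrier by (simp add: k R.m_ac)
  then have "f \<in> Units R" by (rule R.unit_factor) (use r f_carrier in simp_all)
  then show False using f_not_unit by simp
qed

lemma S_coeff_unit_nonneg:
  assumes "\<alpha> \<in> Units R" and "S_coeff n \<alpha>"
  shows "0 \<le> n"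
proof (rule ccontr)
  assume "\<not> 0 \<le> n"
  then have "n = - int (nat (- n))" by simp
  then obtain r where "r \<in> carrier R" "\<alpha> = r \<otimes>\<^bsub>R\<^esub> f [^]\<^bsub>R\<^esub> nat (- n)"
    using \<open>S_coeff n \<alpha>\<close> unfolding S_coeff_def by blast
  then show False using f_pow_multiple_not_unit[of r "nat (- n)"] assms \<open>\<not> 0 \<le> n\<close> by simp
qed

lemma img_Units_iff:
  assumes a: "a \<in> carrier P"
  shows "img R f a \<in> Units S \<longleftrightarrow> (\<exists>\<alpha>\<in>Units R. L a = laurent_monom R 0 \<alpha>)"
proof
  assume "img R f a \<in> Units S"
  then obtain b where b: "b \<in> carrier P" "img R f a \<otimes>\<^bsub>S\<^esub> img R f b = \<one>\<^bsub>S\<^esub>"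
    unfolding Units_def using img_surj by blast
  then have "img R f (a \<otimes>\<^bsub>P\<^esub> b) = img R f (uv_monom \<one>\<^bsub>R\<^esub> 0 0)"
    using a ring_hom_mult[OF img_hom] ring_hom_one[OF img_hom] by (simp add: one_eq_uv_monom)
  then have "L (a \<otimes>\<^bsub>P\<^esub> b) = laurent_monom R 0 \<one>\<^bsub>R\<^esub>"
    using a b by (simp add: img_eq_iff laurent_uv_monom cong: if_cong)
  then obtain A B where AB: "A + B = 0" "L a = laurent_monom R A (L a A)"
      "L a A \<otimes>\<^bsub>R\<^esub> L b B = \<one>\<^bsub>R\<^esub>"
    using laurent_factor_monom[OF a b(1) _ R.one_not_zero] by blast
  then have units: "L a A \<in> Units R" "L b B \<in> Units R"
    using a b R.unit_factor[of "L a A" "L b B"] R.unit_factor[of "L b B" "L a A"]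
      R.m_comm[of "L a A" "L b B"]
    by auto
  have "0 \<le> A" using units(1) S_coeff_laurent[OF a] by (rule S_coeff_unit_nonneg)
  moreover have "0 \<le> B" using units(2) S_coeff_laurent[OF b(1)] by (rule S_coeff_unit_nonneg)
  ultimately have "A = 0" using AB(1) by simp
  then show "\<exists>\<alpha>\<in>Units R. L a = laurent_monom R 0 \<alpha>" using AB(2) units(1) by auto
next
  interpret S: cring S by (rule S_cring)
  assume "\<exists>\<alpha>\<in>Units R. L a = laurent_monom R 0 \<alpha>"
  then obtain \<alpha> where \<alpha>: "\<alpha> \<in> Units R" "L a = laurent_monom R 0 \<alpha>" by blast
  define \<beta> where "\<beta> = inv\<^bsub>R\<^esub> \<alpha>"
  have \<alpha>\<beta>: "\<alpha> \<in> carrier R" "\<beta> \<in> carrier R" "\<alpha> \<otimes>\<^bsub>R\<^esub> \<beta> = \<one>\<^bsub>R\<^esub>"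
    using \<alpha>(1) by (auto simp: \<beta>_def)
  have "img R f (uv_monom \<alpha> 0 0) \<otimes>\<^bsub>S\<^esub> img R f (uv_monom \<beta> 0 0) =
      img R f (uv_monom \<alpha> 0 0 \<otimes>\<^bsub>P\<^esub> uv_monom \<beta> 0 0)"
    using \<alpha>\<beta> by (simp add: ring_hom_mult[OF img_hom])
  also have "\<dots> = \<one>\<^bsub>S\<^esub>"
    using \<alpha>\<beta> ring_hom_one[OF img_hom] by (simp add: uv_monom_mult one_eq_uv_monom)
  finally have "img R f (uv_monom \<alpha> 0 0) \<otimes>\<^bsub>S\<^esub> img R f (uv_monom \<beta> 0 0) \<in> Units S"
    by simp
  then have "img R f (uv_monom \<alpha> 0 0) \<in> Units S"
    using S.unit_factor ring_hom_closed[OF img_hom] uv_monom_closed \<alpha>\<beta>(1,2) by blast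
  moreover have "img R f a = img R f (uv_monom \<alpha> 0 0)"
    using a \<alpha>(2) \<alpha>\<beta> by (simp add: img_eq_iff laurent_uv_monom cong: if_cong)
  ultimately show "img R f a \<in> Units S" by simp
qed

lemma irreducible_img_laurent_monom:
  assumes x: "x \<in> carrier P" and Lx: "L x = laurent_monom R w \<gamma>" and "w \<noteq> 0" "\<gamma> \<noteq> \<zero>\<^bsub>R\<^esub>"
    and split: "\<And>A B \<alpha> \<beta>. A + B = w \<Longrightarrow> \<alpha> \<in> carrier R \<Longrightarrow> \<beta> \<in> carrier R \<Longrightarrow>
      \<alpha> \<otimes>\<^bsub>R\<^esub> \<beta> = \<gamma> \<Longrightarrow>
      S_coeff A \<alpha> \<Longrightarrow> S_coeff B \<beta> \<Longrightarrow>
      (A = 0 \<and> \<alpha> \<in> Units R) \<or> (B = 0 \<and> \<beta> \<in> Units R)"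
  shows "irreducible_elem S (img R f x)"
  unfolding irreducible_elem_def
proof (intro conjI ballI impI)
  have Lx_w: "L x w = \<gamma>" using Lx by simp
  show "img R f x \<in> carrier S" using ring_hom_closed[OF img_hom x] .
  have "L x \<noteq> L \<zero>\<^bsub>P\<^esub>" using Lx_w laurent_zero \<open>\<gamma> \<noteq> \<zero>\<^bsub>R\<^esub>\<close> by auto
  then show "img R f x \<noteq> \<zero>\<^bsub>S\<^esub>"
    using img_eq_iff[OF x P.zero_closed]
      ring_hom_zero[OF img_hom P.ring_axioms cring.axioms(1)[OF S_cring]] by simp
  have "L x \<noteq> laurent_monom R 0 \<alpha>" for \<alpha> using Lx_w \<open>w \<noteq> 0\<close> \<open>\<gamma> \<noteq> \<zero>\<^bsub>R\<^esub>\<close> by auto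
  then show "img R f x \<notin> Units S" using img_Units_iff[OF x] by blast
next
  fix r1 r2 assume "r1 \<in> carrier S" "r2 \<in> carrier S" and x_eq: "img R f x = r1 \<otimes>\<^bsub>S\<^esub> r2"
  then obtain a b where a: "a \<in> carrier P" "r1 = img R f a" and b: "b \<in> carrier P" "r2 = img R f b"
    using img_surj by blast
  then have "img R f x = img R f (a \<otimes>\<^bsub>P\<^esub> b)" using x_eq ring_hom_mult[OF img_hom] by simp
  then have "L (a \<otimes>\<^bsub>P\<^esub> b) = laurent_monom R w \<gamma>" using img_eq_iff[OF x] a(1) b(1) Lx by simp
  then obtain A B where "A + B = w" and La: "L a = laurent_monom R A (L a A)"
      and Lb: "L b = laurent_monom R B (L b B)" and "L a A \<otimes>\<^bsub>R\<^esub> L b B = \<gamma>"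
    using laurent_factor_monom[OF a(1) b(1)] \<open>\<gamma> \<noteq> \<zero>\<^bsub>R\<^esub>\<close> by blast
  then have "(A = 0 \<and> L a A \<in> Units R) \<or> (B = 0 \<and> L b B \<in> Units R)"
    using a b S_coeff_laurent by (intro split) auto
  then show "r1 \<in> Units S \<or> r2 \<in> Units S"
  proof
    assume "A = 0 \<and> L a A \<in> Units R"
    then show ?thesis using img_Units_iff[OF a(1)] La a(2) by auto
  next
    assume "B = 0 \<and> L b B \<in> Units R"
    then show ?thesis using img_Units_iff[OF b(1)] Lb b(2) by auto
  qed
qed

lemma irreducible_var_u: "irreducible_elem S (img R f (var_u R))"
proof (rule irreducible_img_laurent_monom)
  show "L (var_u R) = laurent_monom R 1 \<one>\<^bsub>R\<^esub>"
    by (simp add: var_u_eq laurent_uv_monom cong: if_cong)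
  fix A B \<alpha> \<beta>
  assume "A + B = 1" "\<alpha> \<in> carrier R" "\<beta> \<in> carrier R" "\<alpha> \<otimes>\<^bsub>R\<^esub> \<beta> = \<one>\<^bsub>R\<^esub>"
    and S_coeffs: "S_coeff A \<alpha>" "S_coeff B \<beta>"
  then have units: "\<alpha> \<in> Units R" "\<beta> \<in> Units R"
    using R.unit_factor[of \<alpha> \<beta>] R.unit_factor[of \<beta> \<alpha>] R.m_comm[of \<alpha> \<beta>] by auto
  have "0 \<le> A" using units(1) S_coeffs(1) by (rule S_coeff_unit_nonneg)
  moreover have "0 \<le> B" using units(2) S_coeffs(2) by (rule S_coeff_unit_nonneg)
  ultimately
  show "(A = 0 \<and> \<alpha> \<in> Units R) \<or> (B = 0 \<and> \<beta> \<in> Units R)"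
    using \<open>A + B = 1\<close> units by auto
qed (simp_all add: var_u_eq)

lemma factor_of_f_neg_degree:
  assumes AB: "A + B = -1" and "B < 0" and \<alpha>: "\<alpha> \<in> carrier R" and "\<alpha> \<otimes>\<^bsub>R\<^esub> \<beta> = f"
    and "S_coeff B \<beta>"
  shows "A = 0 \<and> \<alpha> \<in> Units R"
proof -
  obtain k where A: "A = int k" using AB \<open>B < 0\<close> nonneg_int_cases[of A] by force
  then have "B = - int (Suc k)" using AB by simp
  then obtain r where r: "r \<in> carrier R" and \<beta>: "\<beta> = r \<otimes>\<^bsub>R\<^esub> f [^]\<^bsub>R\<^esub> Suc k"
    using \<open>S_coeff B \<beta>\<close> unfolding S_coeff_def by blast
  have "f \<otimes>\<^bsub>R\<^esub> (\<alpha> \<otimes>\<^bsub>R\<^esub> r \<otimes>\<^bsub>R\<^esub> f [^]\<^bsub>R\<^esub> k) = f \<otimes>\<^bsub>R\<^esub> \<one>\<^bsub>R\<^esub>"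
    using \<open>\<alpha> \<otimes>\<^bsub>R\<^esub> \<beta> = f\<close> \<alpha> r f_carrier by (simp add: \<beta> R.m_ac)
  then have unit: "(\<alpha> \<otimes>\<^bsub>R\<^esub> r) \<otimes>\<^bsub>R\<^esub> f [^]\<^bsub>R\<^esub> k = \<one>\<^bsub>R\<^esub>"
    using R.m_lcancel[OF f_nonzero f_carrier, of "\<alpha> \<otimes>\<^bsub>R\<^esub> r \<otimes>\<^bsub>R\<^esub> f [^]\<^bsub>R\<^esub> k" "\<one>\<^bsub>R\<^esub>"]
      \<alpha> r f_carrier by simp
  then have "\<not> 0 < k"
    using f_pow_multiple_not_unit[of "\<alpha> \<otimes>\<^bsub>R\<^esub> r" k] \<alpha> r by auto
  then have "k = 0" by simp
  moreover have "\<alpha> \<in> Units R"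
    using unit \<open>k = 0\<close> R.unit_factor[of \<alpha> r] \<alpha> r by simp
  ultimately show ?thesis using A by simp
qed

lemma irreducible_var_v: "irreducible_elem S (img R f (var_v R))"
proof (rule irreducible_img_laurent_monom)
  show "L (var_v R) = laurent_monom R (-1) f"
    using f_carrier by (simp add: var_v_eq laurent_uv_monom cong: if_cong)
  fix A B \<alpha> \<beta>
  assume "A + B = -1" "\<alpha> \<in> carrier R" "\<beta> \<in> carrier R" "\<alpha> \<otimes>\<^bsub>R\<^esub> \<beta> = f"
    and "S_coeff A \<alpha>" "S_coeff B \<beta>"
  moreover have "\<beta> \<otimes>\<^bsub>R\<^esub> \<alpha> = f" "B + A = -1" using calculation R.m_comm by auto
  ultimately show "(A = 0 \<and> \<alpha> \<in> Units R) \<or> (B = 0 \<and> \<beta> \<in> Units R)"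
    using factor_of_f_neg_degree[of A B \<alpha> \<beta>] factor_of_f_neg_degree[of B A \<beta> \<alpha>]
    by (cases "B < 0") simp_all
qed (simp_all add: var_v_eq f_carrier f_nonzero)

end

end

theorem lemma1p3:
  fixes R :: "('a, 'm) ring_scheme" and f :: 'a
  assumes "domain R"
    and "f \<in> carrier R" and "f \<noteq> \<zero>\<^bsub>R\<^esub>" and "f \<notin> Units R"
  shows "irreducible_elem (S_ring R f) (img R f (var_u R)) \<and>
         irreducible_elem (S_ring R f) (img R f (var_v R))"
proof -
  interpret uv_quotient R f by (rule uv_quotient.intro) (use assms in simp_all)
  show ?thesis using irreducible_var_u[OF assms(4)] irreducible_var_v[OF assms(4)] by simp
qed

end
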